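(* Let $q,w\in L^1[-1,1]$ be real-valued with $q(x)=q(-x)$ and $w(-x)=-w(x)$ for a.e. $x$, and $xw(x)>0$ for a.e. $x\in[-1,1]$. Suppose there are constants $q_0<0$ and $w_0>0$ with $q(x)\ge q_0$ and $|w(x)|\ge w_0$ for a.e. $x\in[-1,1]$. Then every purely imaginary eigenvalue $\lambda$ (i.e. $\lambda=i\alpha$, $\alpha\in\mathbb{R}\setminus\{0\}$) of the problem $-y''+qy=\lambda wy$, $y(-1)=y(1)=0$, satisfies $$|\operatorname{Im}\lambda|\le \frac{4(-q_0)^{3/2}}{w_0}.$$
   Context: A number $\lambda\in\mathbb{C}$ is an eigenvalue of $-y''+qy=\lambda wy$, $y(-1)=y(1)=0$, if there is a nontrivial function $y$ with $y,y'$ absolutely continuous on $[-1,1]$ satisfying $-y''+qy=\lambda wy$ a.e. on $[-1,1]$ and $y(-1)=y(1)=0$. *)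

theory Defs
  imports "HOL-Analysis.Analysis"
begin

definition abs_continuous_on :: "real set \<Rightarrow> (real \<Rightarrow> 'a::real_normed_vector) \<Rightarrow> bool" where
  "abs_continuous_on S f \<longleftrightarrow>
     (\<forall>\<epsilon>>0. \<exists>\<delta>>0. \<forall>(n::nat) (a::nat \<Rightarrow> real) (b::nat \<Rightarrow> real).
        (\<forall>k<n. a k \<le> b k \<and> {a k..b k} \<subseteq> S) \<and>
        (\<forall>i<n. \<forall>j<n. i \<noteq> j \<longrightarrow> b i \<le> a j \<or> b j \<le> a i) \<and>
        (\<Sum>k<n. b k - a k) < \<delta>
        \<longrightarrow> (\<Sum>k<n. norm (f (b k) - f (a k))) < \<epsilon>)"

definition is_eigenvalue :: "(real \<Rightarrow> real) \<Rightarrow> (real \<Rightarrow> real) \<Rightarrow> complex \<Rightarrow> bool" where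
  "is_eigenvalue q w lam \<longleftrightarrow>
     (\<exists>(y::real \<Rightarrow> complex) (y'::real \<Rightarrow> complex).
        (\<exists>x\<in>{-1..1}. y x \<noteq> 0) \<and>
        abs_continuous_on {-1..1} y \<and> abs_continuous_on {-1..1} y' \<and>
        (\<forall>x\<in>{-1..1}. (y has_vector_derivative y' x) (at x within {-1..1})) \<and>
        (AE x in lebesgue. x \<in> {-1..1} \<longrightarrow>
            (\<exists>y''. (y' has_vector_derivative y'') (at x within {-1..1}) \<and>
                   - y'' + complex_of_real (q x) * y x = lam * complex_of_real (w x) * y x)) \<and>
        y (-1) = 0 \<and> y 1 = 0)"

end

theory Submission
  imports Defs
begin

text \<open>
  Bound for purely imaginary eigenvalues \<lambda> = i \<alpha> of -y'' + q y = \<lambda> w y, y(-1) = y(1) = 0,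
  under q \<ge> q0 (q0 < 0), x w(x) > 0 and |w| \<ge> w0: |\<alpha>| \<le> 4 (-q0)^(3/2) / w0.

  Let P = y' * cnj y be the flux of an eigenfunction. By the Lagrange identity,
  Re P' = |y'|^2 + q |y|^2 and Im P' = -\<alpha> w |y|^2 almost everywhere. Since P vanishes at
  +-1, on the half of [-1,1] towards which Re P(0) points (where y has positive mass) the
  kinetic energy is at most -q0 times the mass, and |Im P(x)| dominates |\<alpha>| w0 times the
  mass between x and the end point. A purely real-variable argument then gives the bound.
\<close>

section \<open>Absolute continuity\<close>

definition nonoverlapping_family :: "real set \<Rightarrow> nat \<Rightarrow> (nat \<Rightarrow> real) \<Rightarrow> (nat \<Rightarrow> real) \<Rightarrow> bool" where
  "nonoverlapping_family S n a b \<longleftrightarrow> (\<forall>k<n. a k \<le> b k \<and> {a k..b k} \<subseteq> S) \<and>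
     (\<forall>i<n. \<forall>j<n. i \<noteq> j \<longrightarrow> b i \<le> a j \<or> b j \<le> a i)"

lemma abs_continuous_on_iff_nonoverlapping:
  "abs_continuous_on S f \<longleftrightarrow>
     (\<forall>e>0. \<exists>d>0. \<forall>n a b. nonoverlapping_family S n a b \<and> (\<Sum>k<n. b k - a k) < d
        \<longrightarrow> (\<Sum>k<n. norm (f (b k) - f (a k))) < e)"
  unfolding abs_continuous_on_def nonoverlapping_family_def by simp

lemma abs_continuous_onD:
  assumes "abs_continuous_on S f" "e > 0"
  obtains d where "d > 0"
    "\<And>n a b. nonoverlapping_family S n a b \<Longrightarrow> (\<Sum>k<n. b k - a k) < d \<Longrightarrow>
       (\<Sum>k<n. norm (f (b k) - f (a k))) < e"
  using assms unfolding abs_continuous_on_iff_nonoverlapping by metis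

lemma abs_continuous_on_subset:
  assumes "abs_continuous_on T f" "S \<subseteq> T"
  shows "abs_continuous_on S f"
  unfolding abs_continuous_on_iff_nonoverlapping
proof (intro allI impI)
  fix e :: real assume "e > 0"
  obtain d where "d > 0" and d: "\<And>n a b. nonoverlapping_family T n a b \<Longrightarrow>
      (\<Sum>k<n. b k - a k) < d \<Longrightarrow> (\<Sum>k<n. norm (f (b k) - f (a k))) < e"
    using abs_continuous_onD[OF assms(1) \<open>e > 0\<close>] by blast
  have "nonoverlapping_family S n a b \<Longrightarrow> nonoverlapping_family T n a b" for n a b
    using assms(2) unfolding nonoverlapping_family_def by blast
  with \<open>d > 0\<close> d show "\<exists>d>0. \<forall>n a b. nonoverlapping_family S n a b \<and> (\<Sum>k<n. b k - a k) < d
      \<longrightarrow> (\<Sum>k<n. norm (f (b k) - f (a k))) < e"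
    by blast
qed

text \<open>Specialising the definition to a single interval gives uniform continuity.\<close>
lemma abs_continuous_on_imp_continuous_on:
  assumes "abs_continuous_on {a..b} f"
  shows "continuous_on {a..b} f"
  unfolding continuous_on_iff
proof (intro ballI allI impI)
  fix x e :: real assume x: "x \<in> {a..b}" and "e > 0"
  obtain d where "d > 0" and d: "\<And>n a' b'. nonoverlapping_family {a..b} n a' b' \<Longrightarrow>
      (\<Sum>k<n. b' k - a' k) < d \<Longrightarrow> (\<Sum>k<n. norm (f (b' k) - f (a' k))) < e"
    using abs_continuous_onD[OF assms \<open>e > 0\<close>] by blast
  have close: "norm (f v - f u) < e" if "u \<le> v" "u \<in> {a..b}" "v \<in> {a..b}" "v - u < d" for u v
    using d[of 1 "\<lambda>_. u" "\<lambda>_. v"] that by (auto simp: nonoverlapping_family_def)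
  show "\<exists>d>0. \<forall>x'\<in>{a..b}. dist x' x < d \<longrightarrow> dist (f x') (f x) < e"
  proof (intro exI[of _ d] conjI ballI impI \<open>d > 0\<close>)
    fix x' assume "x' \<in> {a..b}" "dist x' x < d"
    then show "dist (f x') (f x) < e"
      using close[of x x'] close[of x' x] x
      by (cases "x \<le> x'") (auto simp: dist_norm dist_real_def norm_minus_commute)
  qed
qed

text \<open>Complex conjugation preserves absolute continuity (it is an isometry).\<close>
lemma abs_continuous_on_cnj:
  assumes "abs_continuous_on S f"
  shows "abs_continuous_on S (\<lambda>x. cnj (f x))"
  using assms unfolding abs_continuous_on_def by (simp flip: complex_cnj_diff)

text \<open>Products of absolutely continuous functions on a compact interval are absolutely
  continuous, since both factors are bounded there.\<close>
lemma abs_continuous_on_mult: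
  fixes f g :: "real \<Rightarrow> 'a::real_normed_algebra"
  assumes f: "abs_continuous_on {a..b} f" and g: "abs_continuous_on {a..b} g"
  shows "abs_continuous_on {a..b} (\<lambda>x. f x * g x)"
proof -
  have "bounded (f ` {a..b})" "bounded (g ` {a..b})"
    using f g by (auto intro!: compact_imp_bounded compact_continuous_image
        abs_continuous_on_imp_continuous_on)
  then have "bounded (f ` {a..b} \<union> g ` {a..b})" by simp
  then obtain M where M: "M > 0" "\<And>x. x \<in> {a..b} \<Longrightarrow> norm (f x) \<le> M \<and> norm (g x) \<le> M"
    unfolding bounded_pos by blast
  show ?thesis
  unfolding abs_continuous_on_iff_nonoverlapping
proof (intro allI impI)
    fix e :: real assume "e > 0"
    then have e': "e / (2*M) > 0" using M by simp
    obtain d1 where "d1 > 0" and d1: "\<And>n a' b'. nonoverlapping_family {a..b} n a' b' \<Longrightarrow>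
        (\<Sum>k<n. b' k - a' k) < d1 \<Longrightarrow> (\<Sum>k<n. norm (f (b' k) - f (a' k))) < e / (2*M)"
      using abs_continuous_onD[OF f e'] by blast
    obtain d2 where "d2 > 0" and d2: "\<And>n a' b'. nonoverlapping_family {a..b} n a' b' \<Longrightarrow>
        (\<Sum>k<n. b' k - a' k) < d2 \<Longrightarrow> (\<Sum>k<n. norm (g (b' k) - g (a' k))) < e / (2*M)"
      using abs_continuous_onD[OF g e'] by blast
    show "\<exists>d>0. \<forall>n a' b'. nonoverlapping_family {a..b} n a' b' \<and> (\<Sum>k<n. b' k - a' k) < d
        \<longrightarrow> (\<Sum>k<n. norm (f (b' k) * g (b' k) - f (a' k) * g (a' k))) < e"
    proof (intro exI[of _ "min d1 d2"] conjI allI impI)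
      show "min d1 d2 > 0" using \<open>d1 > 0\<close> \<open>d2 > 0\<close> by simp
      fix n :: nat and a' b' :: "nat \<Rightarrow> real"
      assume A: "nonoverlapping_family {a..b} n a' b' \<and> (\<Sum>k<n. b' k - a' k) < min d1 d2"
      have step: "norm (f (b' k) * g (b' k) - f (a' k) * g (a' k))
          \<le> M * norm (g (b' k) - g (a' k)) + M * norm (f (b' k) - f (a' k))" if "k < n" for k
      proof -
        have ab: "a' k \<in> {a..b}" "b' k \<in> {a..b}"
          using A that by (auto simp: nonoverlapping_family_def)
        have "f (b' k) * g (b' k) - f (a' k) * g (a' k)
            = f (b' k) * (g (b' k) - g (a' k)) + (f (b' k) - f (a' k)) * g (a' k)"
          by (simp add: algebra_simps)
        also have "norm \<dots> \<le> norm (f (b' k)) * norm (g (b' k) - g (a' k))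
            + norm (f (b' k) - f (a' k)) * norm (g (a' k))"
          by (rule order_trans[OF norm_triangle_ineq add_mono[OF norm_mult_ineq norm_mult_ineq]])
        also have "\<dots> \<le> M * norm (g (b' k) - g (a' k)) + norm (f (b' k) - f (a' k)) * M"
          using M(2)[OF ab(1)] M(2)[OF ab(2)]
          by (intro add_mono mult_right_mono mult_left_mono) auto
        finally show ?thesis by (simp add: mult.commute)
      qed
      have "(\<Sum>k<n. norm (f (b' k) * g (b' k) - f (a' k) * g (a' k)))
          \<le> M * (\<Sum>k<n. norm (g (b' k) - g (a' k))) + M * (\<Sum>k<n. norm (f (b' k) - f (a' k)))"
        using sum_mono[of "{..<n}", OF step] by (simp add: sum.distrib sum_distrib_left)
      also have "\<dots> < M * (e / (2*M)) + M * (e / (2*M))"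
        using d1 d2 A M(1) by (intro add_strict_mono mult_strict_left_mono) auto
      also have "\<dots> = e" using M(1) by (simp add: field_simps)
      finally show "(\<Sum>k<n. norm (f (b' k) * g (b' k) - f (a' k) * g (a' k))) < e" .
    qed
  qed
qed


section \<open>The fundamental theorem of calculus for absolutely continuous functions\<close>

lemma disjoint_open_intervals_ordered:
  fixes u1 v1 u2 v2 :: real
  assumes "u1 < v1" "u2 < v2" "{u1<..<v1} \<inter> {u2<..<v2} = {}"
  shows "v1 \<le> u2 \<or> v2 \<le> u1"
proof (rule ccontr)
  assume "\<not> (v1 \<le> u2 \<or> v2 \<le> u1)"
  then have "(max u1 u2 + min v1 v2) / 2 \<in> {u1<..<v1} \<inter> {u2<..<v2}"
    using assms(1,2) by (auto simp: max_def min_def)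
  then show False using assms(3) by blast
qed

text \<open>Nondegenerate intervals of a tagged division form a non-overlapping family, so
  the absolute-continuity estimate applies to any collection of them of small total length.\<close>
lemma sum_increments_tagged_small:
  fixes G :: "real \<Rightarrow> 'a::real_normed_vector"
  assumes ac: "\<And>n a' b'. nonoverlapping_family {a..b} n a' b' \<Longrightarrow> (\<Sum>k<n. b' k - a' k) < d \<Longrightarrow>
                 (\<Sum>k<n. norm (G (b' k) - G (a' k))) < e"
    and p: "p tagged_division_of {a..b}" and S: "S \<subseteq> p"
    and nondeg: "\<And>x K. (x, K) \<in> S \<Longrightarrow> measure lborel K \<noteq> 0"
    and small: "(\<Sum>(x,K)\<in>S. measure lborel K) < d"
  shows "(\<Sum>(x,K)\<in>S. norm (G (Sup K) - G (Inf K))) < e"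
proof -
  have "finite S" using S p finite_subset by blast
  then obtain h where h: "bij_betw h {..<card S} S"
    using ex_bij_betw_nat_finite lessThan_atLeast0 by metis
  define n where "n = card S"
  define a' where "a' k = Inf (snd (h k))" for k
  define b' where "b' k = Sup (snd (h k))" for k
  have shape: "snd (h k) = {a' k..b' k} \<and> a' k < b' k \<and> {a' k..b' k} \<subseteq> {a..b} \<and> h k \<in> p"
    if "k < n" for k
  proof -
    obtain x K where hk: "h k = (x, K)" by fastforce
    have xK: "(x, K) \<in> S" using h that hk by (metis bij_betwE lessThan_iff n_def)
    obtain u v where K: "K = {u..v}"
      using tagged_division_ofD(4)[OF p] S xK by (metis box_real(2) subsetD)
    have "u < v" "K \<subseteq> {a..b}" "(x, K) \<in> p"
      using nondeg[OF xK] tagged_division_ofD(3)[OF p, of x K] S xK K by (auto split: if_splits)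
    with K hk show ?thesis by (simp add: a'_def b'_def)
  qed
  have family: "nonoverlapping_family {a..b} n a' b'"
    unfolding nonoverlapping_family_def
  proof (rule conjI; intro allI impI)
    fix k assume "k < n"
    then show "a' k \<le> b' k \<and> {a' k..b' k} \<subseteq> {a..b}" using shape by fastforce
  next
    fix i j assume ij: "i < n" "j < n" "i \<noteq> j"
    then have "h i \<noteq> h j" using h by (auto simp: n_def bij_betw_def inj_on_def)
    moreover have "h i \<in> p" "h j \<in> p" using shape ij by blast+
    ultimately have "(fst (h i), snd (h i)) \<in> p" "(fst (h j), snd (h j)) \<in> p"
      "(fst (h i), snd (h i)) \<noteq> (fst (h j), snd (h j))"
      by simp_all
    then have "interior (snd (h i)) \<inter> interior (snd (h j)) = {}"
      by (rule tagged_division_ofD(5)[OF p])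
    then have "{a' i<..<b' i} \<inter> {a' j<..<b' j} = {}"
      using shape[OF ij(1)] shape[OF ij(2)] by (metis interior_atLeastAtMost_real)
    then show "b' i \<le> a' j \<or> b' j \<le> a' i"
      using disjoint_open_intervals_ordered shape[OF ij(1)] shape[OF ij(2)] by blast
  qed
  have reindex: "(\<Sum>k<n. \<phi> (h k)) = (\<Sum>z\<in>S. \<phi> z)" for \<phi> :: "real \<times> real set \<Rightarrow> real"
    using sum.reindex_bij_betw[OF h] by (simp add: n_def)
  have "(\<Sum>k<n. b' k - a' k) = (\<Sum>k<n. measure lborel (snd (h k)))"
  proof (rule sum.cong)
    fix k assume "k \<in> {..<n}"
    with shape[of k] show "b' k - a' k = measure lborel (snd (h k))" by auto
  qed simp
  also have "\<dots> = (\<Sum>(x,K)\<in>S. measure lborel K)"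
    using reindex[of "\<lambda>z. measure lborel (snd z)"] by (simp add: split_def)
  finally have "(\<Sum>k<n. b' k - a' k) = (\<Sum>(x,K)\<in>S. measure lborel K)" .
  with small have "(\<Sum>k<n. norm (G (b' k) - G (a' k))) < e"
    by (intro ac family) simp
  then show ?thesis
    using reindex[of "\<lambda>z. norm (G (Sup (snd z)) - G (Inf (snd z)))"]
    by (simp add: split_def a'_def b'_def)
qed

text \<open>The total length of nondegenerate intervals of a tagged division is bounded by the
  measure of any measurable set covering them (distinct tags carry distinct intervals).\<close>
lemma sum_content_tagged_le_measure:
  assumes p: "p tagged_division_of {a..b}" and S: "S \<subseteq> p"
    and nondeg: "\<And>x K. (x, K) \<in> S \<Longrightarrow> measure lborel K \<noteq> 0"
    and cover: "\<Union>(snd ` S) \<subseteq> U" and U: "U \<in> lmeasurable"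
  shows "(\<Sum>(x,K)\<in>S. measure lborel K) \<le> measure lebesgue U"
proof -
  have "snd ` p division_of \<Union>(snd ` p)"
    using division_of_tagged_division[OF p] division_ofD(6) by metis
  then have div: "snd ` S division_of \<Union>(snd ` S)"
    by (rule division_of_subset) (use S in blast)
  have "inj_on snd S"
  proof (rule inj_onI)
    fix z1 z2 assume z: "z1 \<in> S" "z2 \<in> S" "snd z1 = snd z2"
    show "z1 = z2"
    proof (rule ccontr)
      assume "z1 \<noteq> z2"
      then have "interior (snd z1) = {}"
        using tagged_division_ofD(5)[OF p, of "fst z1" "snd z1" "fst z2" "snd z2"] z S
        by (metis Int_absorb prod.collapse subsetD)
      moreover obtain u v where "snd z1 = cbox u v"
        using tagged_division_ofD(4)[OF p, of "fst z1" "snd z1"] z S by (metis prod.collapse subsetD)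
      moreover have "measure lborel (snd z1) \<noteq> 0"
        using nondeg[of "fst z1" "snd z1"] z(1) by simp
      ultimately show False by (simp add: content_eq_0_interior)
    qed
  qed
  then have "(\<Sum>(x,K)\<in>S. measure lborel K) = (\<Sum>K\<in>snd ` S. measure lborel K)"
    using sum.reindex[of snd S "measure lborel"] by (simp add: split_def)
  also have "\<dots> = (\<Sum>K\<in>snd ` S. measure lebesgue K)"
  proof (rule sum.cong)
    fix K assume "K \<in> snd ` S"
    then obtain u v where "K = cbox u v" using division_ofD(4)[OF div] by blast
    then show "measure lborel K = measure lebesgue K" by simp
  qed simp
  also have "\<dots> = measure lebesgue (\<Union>(snd ` S))"
    by (rule content_division[OF div])
  also have "\<dots> \<le> measure lebesgue U"
    by (rule measure_mono_fmeasurable[OF cover fmeasurableD[OF lmeasurable_division[OF div]] U])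
  finally show ?thesis .
qed

lemma tagged_interval_error:
  fixes G :: "real \<Rightarrow> 'a::real_normed_vector"
  assumes "u \<le> x" "x \<le> v"
    and "norm (G u - G x - (u - x) *\<^sub>R g) \<le> \<epsilon> * \<bar>u - x\<bar>"
    and "norm (G v - G x - (v - x) *\<^sub>R g) \<le> \<epsilon> * \<bar>v - x\<bar>"
  shows "norm ((v - u) *\<^sub>R g - (G v - G u)) \<le> \<epsilon> * (v - u)"
proof -
  have "(v - u) *\<^sub>R g - (G v - G u) = (G u - G x - (u - x) *\<^sub>R g) - (G v - G x - (v - x) *\<^sub>R g)"
    by (simp add: algebra_simps)
  then have "norm ((v - u) *\<^sub>R g - (G v - G u)) \<le> \<epsilon> * \<bar>u - x\<bar> + \<epsilon> * \<bar>v - x\<bar>"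
    using assms(3,4) norm_triangle_ineq4 by (smt (verit))
  also have "\<dots> = \<epsilon> * (v - u)" using assms(1,2) by (simp add: algebra_simps)
  finally show ?thesis .
qed

text \<open>The gauge uses differentiability at
  tags outside E, and at tags in E balls inside an open set T \<supseteq> E of small measure, so that
  the intervals tagged in E have small total length and absolute continuity controls them.\<close>
theorem fundamental_theorem_of_calculus_abs_continuous:
  fixes G g :: "real \<Rightarrow> 'a::real_normed_vector"
  assumes ab: "a \<le> b" and ac: "abs_continuous_on {a..b} G" and E: "negligible E"
    and der: "\<And>x. x \<in> {a..b} - E \<Longrightarrow> (G has_vector_derivative g x) (at x within {a..b})"
  shows "(g has_integral (G b - G a)) {a..b}"
proof -
  define f where "f x = (if x \<in> E then 0 else g x)" for x
  have "(f has_integral (G b - G a)) {a..b}"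
    unfolding has_integral_real
  proof (intro allI impI)
    fix e :: real assume e: "e > 0"
    define \<epsilon> where "\<epsilon> = e / (2 * (b - a + 1))"
    have \<epsilon>: "\<epsilon> > 0" "\<epsilon> * (b - a) < e / 2" using e ab by (simp_all add: \<epsilon>_def field_simps)
    have "\<exists>r>0. \<forall>y\<in>{a..b}. norm (y - x) < r \<longrightarrow> norm (G y - G x - (y - x) *\<^sub>R g x) \<le> \<epsilon> * norm (y - x)"
      if "x \<in> {a..b} - E" for x
      using der[OF that] \<epsilon> unfolding has_vector_derivative_def has_derivative_within_alt by blast
    then obtain rD where rD: "\<And>x. x \<in> {a..b} - E \<Longrightarrow> rD x > 0"
      "\<And>x y. x \<in> {a..b} - E \<Longrightarrow> y \<in> {a..b} \<Longrightarrow> norm (y - x) < rD x \<Longrightarrow>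
         norm (G y - G x - (y - x) *\<^sub>R g x) \<le> \<epsilon> * norm (y - x)"
      by metis
    obtain \<delta> where "\<delta> > 0" and \<delta>: "\<And>n a' b'. nonoverlapping_family {a..b} n a' b' \<Longrightarrow>
        (\<Sum>k<n. b' k - a' k) < \<delta> \<Longrightarrow> (\<Sum>k<n. norm (G (b' k) - G (a' k))) < e/2"
      using abs_continuous_onD[OF ac, of "e/2"] e by auto
    obtain T where T: "open T" "E \<subseteq> T" "T - E \<in> lmeasurable" "emeasure lebesgue (T - E) < ennreal \<delta>"
      using sets_lebesgue_outer_open[OF negligible_imp_sets[OF E] \<open>\<delta> > 0\<close>] by metis
    have T_small: "T \<in> lmeasurable" "measure lebesgue T < \<delta>"
    proof -
      have "T = (T - E) \<union> E" using T(2) by blast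
      moreover have "measure lebesgue ((T - E) \<union> E) \<le> measure lebesgue (T - E) + measure lebesgue E"
        using T(3) negligible_imp_sets[OF E] by (intro measure_Un_le) auto
      ultimately show "T \<in> lmeasurable" "measure lebesgue T < \<delta>"
        using T(3,4) \<open>\<delta> > 0\<close> negligible_imp_measurable[OF E] negligible_imp_measure0[OF E]
        by (metis fmeasurable.Un, simp add: emeasure_eq_measure2 ennreal_less_iff)
    qed
    have "\<exists>r>0. ball x r \<subseteq> T" if "x \<in> E" for x
      using T(1,2) that open_contains_ball by blast
    then obtain rE where rE: "\<And>x. x \<in> E \<Longrightarrow> rE x > 0 \<and> ball x (rE x) \<subseteq> T" by metis
    define \<gamma> where "\<gamma> x = (if x \<in> E then ball x (rE x) else if x \<in> {a..b} then ball x (rD x) else ball x 1)" for x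
    have gauge: "gauge \<gamma>"
      unfolding gauge_def \<gamma>_def using rD(1) rE by auto
    show "\<exists>\<gamma>. gauge \<gamma> \<and> (\<forall>p. p tagged_division_of {a..b} \<and> \<gamma> fine p \<longrightarrow>
            norm ((\<Sum>(x,K)\<in>p. measure lborel K *\<^sub>R f x) - (G b - G a)) < e)"
    proof (intro exI[of _ \<gamma>] conjI allI impI gauge)
      fix p assume "p tagged_division_of {a..b} \<and> \<gamma> fine p"
      then have p: "p tagged_division_of {a..b}" and fine: "\<gamma> fine p" by auto
      define \<Delta> where "\<Delta> K = G (Sup K) - G (Inf K)" for K
      define S where "S = {(x,K)\<in>p. x \<in> E \<and> measure lborel K \<noteq> 0}"
      have shape: "\<exists>u v. K = {u..v} \<and> u \<le> x \<and> x \<le> v \<and> a \<le> u \<and> v \<le> b \<and> K \<subseteq> \<gamma> x"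
        if xK: "(x,K) \<in> p" for x K
      proof -
        obtain u v where K: "K = {u..v}" using tagged_division_ofD(4)[OF p xK] by auto
        then show ?thesis
          using tagged_division_ofD(2,3)[OF p xK] fine xK by (auto simp: fine_def)
      qed
      have local_error: "norm (measure lborel K *\<^sub>R f x - \<Delta> K) \<le>
          \<epsilon> * measure lborel K + (if (x, K) \<in> S then norm (\<Delta> K) else 0)"
        if xK: "(x,K) \<in> p" for x K
      proof -
        obtain u v where K: "K = {u..v}" and uv: "u \<le> x" "x \<le> v" "a \<le> u" "v \<le> b"
          and sub: "K \<subseteq> \<gamma> x"
          using shape[OF xK] by blast
        have SI: "Sup K = v" "Inf K = u" "measure lborel K = v - u" using uv K by auto
        show ?thesis
        proof (cases "x \<in> E")
          case True
          have "0 \<le> \<epsilon> * measure lborel K" using SI \<epsilon> uv by simp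
          then show ?thesis using True SI xK by (auto simp: f_def \<Delta>_def S_def norm_minus_commute)
        next
          case False
          then have x: "x \<in> {a..b} - E" using uv by auto
          have "u \<in> \<gamma> x" "v \<in> \<gamma> x" using sub K uv by auto
          then have "norm (u - x) < rD x" "norm (v - x) < rD x" using x
            by (auto simp: \<gamma>_def dist_real_def abs_minus_commute)
          then have "norm ((v - u) *\<^sub>R g x - (G v - G u)) \<le> \<epsilon> * (v - u)"
            using uv rD(2)[OF x, of u] rD(2)[OF x, of v]
            by (intro tagged_interval_error) auto
          then show ?thesis using False by (simp add: SI \<Delta>_def f_def S_def)
        qed
      qed
      have "S \<subseteq> p" by (auto simp: S_def)
      have S_nondeg: "measure lborel K \<noteq> 0" if "(x,K) \<in> S" for x K
        using that by (simp add: S_def)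
      have "\<Union>(snd ` S) \<subseteq> T"
        using shape rE by (fastforce simp: S_def \<gamma>_def)
      then have "(\<Sum>(x,K)\<in>S. measure lborel K) < \<delta>"
        using sum_content_tagged_le_measure[OF p \<open>S \<subseteq> p\<close> S_nondeg _ T_small(1)] T_small(2)
        by fastforce
      then have S_small: "(\<Sum>(x,K)\<in>S. norm (\<Delta> K)) < e/2"
        using sum_increments_tagged_small[OF \<delta> p \<open>S \<subseteq> p\<close> S_nondeg]
        unfolding \<Delta>_def by simp
      have "(\<Sum>(x,K)\<in>p. measure lborel K *\<^sub>R f x) - (G b - G a) = (\<Sum>(x,K)\<in>p. measure lborel K *\<^sub>R f x - \<Delta> K)"
        using additive_tagged_division_1[OF ab p, of G] by (simp add: \<Delta>_def sum_subtractf split_def)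
      also have "norm \<dots> \<le> (\<Sum>(x,K)\<in>p. \<epsilon> * measure lborel K + (if (x, K) \<in> S then norm (\<Delta> K) else 0))"
        using local_error by (intro order_trans[OF norm_sum] sum_mono) auto
      also have "\<dots> = \<epsilon> * (\<Sum>(x,K)\<in>p. measure lborel K) + (\<Sum>(x,K)\<in>S. norm (\<Delta> K))"
        using tagged_division_of_finite[OF p] \<open>S \<subseteq> p\<close>
        by (simp add: sum.distrib sum_distrib_left split_def sum.If_cases Int_absorb1)
      also have "\<dots> = \<epsilon> * (b - a) + (\<Sum>(x,K)\<in>S. norm (\<Delta> K))"
        using additive_content_tagged_division[of p a b] p ab by simp
      also have "\<dots> < e" using \<epsilon>(2) S_small by simp
      finally show "norm ((\<Sum>(x,K)\<in>p. measure lborel K *\<^sub>R f x) - (G b - G a)) < e" .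
    qed
  qed
  then show ?thesis
    by (rule has_integral_spike[OF E, rotated]) (simp add: f_def)
qed


section \<open>A real-variable estimate for energy and flux\<close>

lemma weighted_am_gm: "(s::real) > 0 \<Longrightarrow> x * y \<le> (s * y\<^sup>2 + x\<^sup>2 / s) / 2"
proof -
  assume s: "s > 0"
  have "0 \<le> (s * y - x)\<^sup>2 / s" using s by simp
  also have "\<dots> = s * y\<^sup>2 - 2 * x * y + x\<^sup>2 / s" using s by (simp add: field_simps power2_eq_square)
  finally show ?thesis by simp
qed

lemma integral_lincomb:
  fixes f g :: "real \<Rightarrow> real"
  assumes "f integrable_on S" "g integrable_on S"
  shows "integral S (\<lambda>x. A * f x + B * g x) = A * integral S f + B * integral S g"
proof -
  have "(\<lambda>x. A * f x) integrable_on S" "(\<lambda>x. B * g x) integrable_on S"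
    using integrable_cmul[OF assms(1), of A] integrable_cmul[OF assms(2), of B] by simp_all
  then show ?thesis by (simp add: integral_add)
qed

text \<open>If the energy of v is at most Q times that of u, then the mixed integral of u v is at
  most sqrt Q times the energy of u (Cauchy-Schwarz, via the weighted AM-GM inequality).\<close>
lemma integral_product_le_energy:
  fixes u v :: "real \<Rightarrow> real"
  assumes cu: "continuous_on {a..b} u" and cv: "continuous_on {a..b} v" and Q: "Q > 0"
    and energy: "integral {a..b} (\<lambda>x. (v x)\<^sup>2) \<le> Q * integral {a..b} (\<lambda>x. (u x)\<^sup>2)"
  shows "integral {a..b} (\<lambda>x. u x * v x) \<le> sqrt Q * integral {a..b} (\<lambda>x. (u x)\<^sup>2)"
proof -
  define s where "s = 1 / sqrt Q"
  have s: "s > 0" "Q * s = 1 / s" using Q by (simp_all add: s_def field_simps real_div_sqrt)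
  have "integral {a..b} (\<lambda>x. u x * v x) \<le> integral {a..b} (\<lambda>x. (s/2) * (v x)\<^sup>2 + (1 / (2 * s)) * (u x)\<^sup>2)"
    using weighted_am_gm[OF s(1)]
    by (intro integral_le integrable_continuous_interval continuous_intros cu cv) (simp add: field_simps)
  also have "\<dots> = (s/2) * integral {a..b} (\<lambda>x. (v x)\<^sup>2) + (1 / (2 * s)) * integral {a..b} (\<lambda>x. (u x)\<^sup>2)"
    by (intro integral_lincomb integrable_continuous_interval continuous_intros cu cv)
  also have "\<dots> \<le> (s/2) * (Q * integral {a..b} (\<lambda>x. (u x)\<^sup>2)) + (1 / (2 * s)) * integral {a..b} (\<lambda>x. (u x)\<^sup>2)"
    using energy s by (intro add_right_mono mult_left_mono) auto
  also have "\<dots> = sqrt Q * integral {a..b} (\<lambda>x. (u x)\<^sup>2)"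
    using s Q by (simp add: field_simps s_def)
  finally show ?thesis .
qed

lemma pointwise_bound_from_energy:
  fixes u v :: "real \<Rightarrow> real"
  assumes cv: "continuous_on {0..1} v" and x: "x \<in> {0..1}" and "0 \<le> u x"
    and dom: "u x \<le> integral {x..1} v" and M: "M > 0"
    and energy: "integral {0..1} (\<lambda>t. (v t)\<^sup>2) \<le> M"
  shows "(u x)\<^sup>2 \<le> M"
proof -
  define s where "s = 1 / sqrt M"
  have s: "s > 0" "M * s = 1 / s" using M by (simp_all add: s_def field_simps real_div_sqrt)
  have cvx: "continuous_on {x..1} v" using x by (intro continuous_on_subset[OF cv]) auto
  have "u x \<le> integral {x..1} v" by (rule dom)
  also have "\<dots> \<le> integral {x..1} (\<lambda>t. (s/2) * (v t)\<^sup>2 + (1 / (2 * s)) * 1)"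
    using weighted_am_gm[OF s(1), of 1]
    by (intro integral_le integrable_continuous_interval continuous_intros cvx) (simp add: field_simps)
  also have "\<dots> = (s/2) * integral {x..1} (\<lambda>t. (v t)\<^sup>2) + (1 / (2 * s)) * (1 - x)"
    using x by (subst integral_lincomb) (auto intro: integrable_continuous_interval continuous_intros cvx)
  also have "\<dots> \<le> (s/2) * M + (1 / (2 * s)) * 1"
  proof (intro add_mono mult_left_mono)
    have "integral {x..1} (\<lambda>t. (v t)\<^sup>2) \<le> integral {0..1} (\<lambda>t. (v t)\<^sup>2)"
      using x by (intro integral_subset_le integrable_continuous_interval continuous_intros cv cvx) auto
    then show "integral {x..1} (\<lambda>t. (v t)\<^sup>2) \<le> M" using energy by simp
  qed (use s x in auto)
  also have "\<dots> = sqrt M"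
    using s M by (simp add: field_simps s_def)
  finally have "u x \<le> sqrt M" .
  then show ?thesis using \<open>0 \<le> u x\<close> M by (metis power_mono real_sqrt_pow2 less_imp_le)
qed


text \<open>Here u plays the role of |y|, v of |y'|, and
  I of the imaginary part of y' * cnj y: if |I| \<le> u v, the energy of v is at most Q times
  that of u, u x \<le> \<integral>[x,1] v, and c \<integral>[x,1] u^2 \<le> |I x|, then c \<le> 4 Q^(3/2). Idea: u^2 \<le> Q N
  pointwise (N the energy of u), so at least half of N sits in [1/(2Q),1]; integrating the lower
  bound for |I| over [0,1/(2Q)] and comparing with \<integral> u v \<le> sqrt Q N gives the claim.\<close>
lemma energy_flux_bound:
  fixes u v I :: "real \<Rightarrow> real" and Q c :: real
  assumes cu: "continuous_on {0..1} u" and cv: "continuous_on {0..1} v" and cI: "continuous_on {0..1} I"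
    and nonneg: "\<And>x. x \<in> {0..1} \<Longrightarrow> 0 \<le> u x \<and> 0 \<le> v x"
    and flux: "\<And>x. x \<in> {0..1} \<Longrightarrow> \<bar>I x\<bar> \<le> u x * v x"
    and energy: "integral {0..1} (\<lambda>x. (v x)\<^sup>2) \<le> Q * integral {0..1} (\<lambda>x. (u x)\<^sup>2)"
    and dom: "\<And>x. x \<in> {0..1} \<Longrightarrow> u x \<le> integral {x..1} v"
    and lower: "\<And>x. x \<in> {0..1} \<Longrightarrow> c * integral {x..1} (\<lambda>t. (u t)\<^sup>2) \<le> \<bar>I x\<bar>"
    and Q: "0 < Q" and N: "0 < integral {0..1} (\<lambda>x. (u x)\<^sup>2)"
  shows "c \<le> 4 * Q powr (3/2)"
proof (cases "c \<le> 0")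
  case True
  then show ?thesis using Q by (smt (verit) powr_ge_zero)
next
  case False
  then have c: "c > 0" by simp
  define N where "N = integral {0..1} (\<lambda>x. (u x)\<^sup>2)"
  have "N > 0" using N by (simp add: N_def)
  have cu2: "continuous_on {0..1} (\<lambda>x. (u x)\<^sup>2)" by (intro continuous_intros cu)
  have cuv: "continuous_on {0..1} (\<lambda>x. u x * v x)" by (intro continuous_intros cu cv)
  have int_sub: "integral {s..t} f \<le> integral {0..1} f"
    if "continuous_on {0..1} f" "\<And>x. x \<in> {0..1} \<Longrightarrow> 0 \<le> f x" "0 \<le> s" "t \<le> 1" for f :: "real \<Rightarrow> real" and s t
    using that by (intro integral_subset_le integrable_continuous_interval continuous_on_subset[OF that(1)]) auto
  have sup_bound: "(u x)\<^sup>2 \<le> Q * N" if "x \<in> {0..1}" for x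
  proof (rule pointwise_bound_from_energy[where u=u, OF cv that _ dom[OF that]])
    show "0 \<le> u x" using nonneg[OF that] by simp
    show "0 < Q * N" using Q \<open>N > 0\<close> by simp
  qed (use energy in \<open>simp add: N_def\<close>)
  have "integral {0..1} (\<lambda>x. (u x)\<^sup>2) \<le> integral {0..1} (\<lambda>x::real. Q * N)"
    using sup_bound by (intro integral_le integrable_continuous_interval cu2) auto
  then have "Q \<ge> 1" using \<open>N > 0\<close> by (simp add: N_def[symmetric])
  define \<delta> where "\<delta> = 1 / (2 * Q)"
  have \<delta>: "0 < \<delta>" "\<delta> \<le> 1" using Q \<open>Q \<ge> 1\<close> by (auto simp: \<delta>_def field_simps)
  have "integral {0..\<delta>} (\<lambda>x. (u x)\<^sup>2) \<le> integral {0..\<delta>} (\<lambda>x. Q * N)"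
    using \<delta> sup_bound by (intro integral_le integrable_continuous_interval continuous_on_subset[OF cu2]) auto
  also have "\<dots> = N / 2" using \<delta> Q by (simp add: \<delta>_def field_simps)
  finally have "integral {0..\<delta>} (\<lambda>x. (u x)\<^sup>2) \<le> N / 2" .
  moreover have "integral {0..\<delta>} (\<lambda>x. (u x)\<^sup>2) + integral {\<delta>..1} (\<lambda>x. (u x)\<^sup>2) = N"
    unfolding N_def using \<delta> by (intro Henstock_Kurzweil_Integration.integral_combine integrable_continuous_interval cu2) auto
  ultimately have tail: "N / 2 \<le> integral {\<delta>..1} (\<lambda>x. (u x)\<^sup>2)" by linarith
  have cIa: "continuous_on {0..\<delta>} (\<lambda>x. \<bar>I x\<bar>)"
    using \<delta> by (intro continuous_intros continuous_on_subset[OF cI]) auto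
  have "\<delta> * (c * (N/2)) = integral {0..\<delta>} (\<lambda>x. c * (N/2))" using \<delta> by simp
  also have "\<dots> \<le> integral {0..\<delta>} (\<lambda>x. \<bar>I x\<bar>)"
  proof (intro integral_le integrable_continuous_interval cIa continuous_intros)
    fix x assume x: "x \<in> {0..\<delta>}"
    have "N / 2 \<le> integral {x..1} (\<lambda>x. (u x)\<^sup>2)"
      using tail x \<delta> nonneg
      by (intro order_trans[OF tail] integral_subset_le integrable_continuous_interval
          continuous_on_subset[OF cu2]) auto
    then have "c * (N/2) \<le> c * integral {x..1} (\<lambda>x. (u x)\<^sup>2)" using c by simp
    also have "\<dots> \<le> \<bar>I x\<bar>" using lower x \<delta> by simp
    finally show "c * (N/2) \<le> \<bar>I x\<bar>" .
  qed
  also have "\<dots> \<le> integral {0..\<delta>} (\<lambda>x. u x * v x)"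
    using \<delta> flux by (intro integral_le integrable_continuous_interval cIa continuous_on_subset[OF cuv]) auto
  also have "\<dots> \<le> integral {0..1} (\<lambda>x. u x * v x)"
    using \<delta> nonneg by (intro int_sub cuv) auto
  also have "\<dots> \<le> sqrt Q * N"
    unfolding N_def by (rule integral_product_le_energy[OF cu cv Q energy])
  finally have "c * N / (4 * Q) \<le> sqrt Q * N" by (simp add: \<delta>_def field_simps)
  then have "c \<le> 4 * Q * sqrt Q" using \<open>N > 0\<close> Q by (simp add: field_simps)
  also have "4 * Q * sqrt Q = 4 * Q powr (3/2)"
  proof -
    have "Q powr (3/2) = Q powr (1 + 1/2)" by simp
    also have "\<dots> = Q powr 1 * Q powr (1/2)" by (rule powr_add)
    finally have "Q powr (3/2) = Q powr 1 * Q powr (1/2)" .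
    then show ?thesis using Q by (simp add: powr_half_sqrt)
  qed
  finally show ?thesis .
qed


lemma energy_flux_bound_left:
  fixes u v I :: "real \<Rightarrow> real" and Q c :: real
  assumes cu: "continuous_on {-1..0} u" and cv: "continuous_on {-1..0} v" and cI: "continuous_on {-1..0} I"
    and nonneg: "\<And>x. x \<in> {-1..0} \<Longrightarrow> 0 \<le> u x \<and> 0 \<le> v x"
    and flux: "\<And>x. x \<in> {-1..0} \<Longrightarrow> \<bar>I x\<bar> \<le> u x * v x"
    and energy: "integral {-1..0} (\<lambda>x. (v x)\<^sup>2) \<le> Q * integral {-1..0} (\<lambda>x. (u x)\<^sup>2)"
    and dom: "\<And>x. x \<in> {-1..0} \<Longrightarrow> u x \<le> integral {-1..x} v"
    and lower: "\<And>x. x \<in> {-1..0} \<Longrightarrow> c * integral {-1..x} (\<lambda>t. (u t)\<^sup>2) \<le> \<bar>I x\<bar>"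
    and Q: "0 < Q" and N: "0 < integral {-1..0} (\<lambda>x. (u x)\<^sup>2)"
  shows "c \<le> 4 * Q powr (3/2)"
proof (rule energy_flux_bound[of "\<lambda>x. u (-x)" "\<lambda>x. v (-x)" "\<lambda>x. I (-x)" Q c])
  have reflect: "integral {x..1} (\<lambda>t. f (-t)) = integral {-1..-x} f" for x and f :: "real \<Rightarrow> real"
    using Henstock_Kurzweil_Integration.integral_reflect_real[of "-x" "-1" f] by simp
  have mirror: "(\<lambda>x. - x) ` {0..1::real} \<subseteq> {-1..0}" by auto
  show "continuous_on {0..1} (\<lambda>x. u (- x))" "continuous_on {0..1} (\<lambda>x. v (- x))"
    "continuous_on {0..1} (\<lambda>x. I (- x))"
    by (intro continuous_on_compose2[OF _ continuous_on_minus[OF continuous_on_id] mirror] cu cv cI)+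
  show "\<And>x. x \<in> {0..1} \<Longrightarrow> 0 \<le> u (- x) \<and> 0 \<le> v (- x)"
    "\<And>x. x \<in> {0..1} \<Longrightarrow> \<bar>I (- x)\<bar> \<le> u (- x) * v (- x)"
    using nonneg flux by auto
  show "integral {0..1} (\<lambda>x. (v (- x))\<^sup>2) \<le> Q * integral {0..1} (\<lambda>x. (u (- x))\<^sup>2)"
    using energy reflect[of 0 "\<lambda>x. (v x)\<^sup>2"] reflect[of 0 "\<lambda>x. (u x)\<^sup>2"] by simp
  show "u (- x) \<le> integral {x..1} (\<lambda>x. v (- x))" if "x \<in> {0..1}" for x
    using dom[of "-x"] that reflect[of x v] by simp
  show "c * integral {x..1} (\<lambda>t. (u (- t))\<^sup>2) \<le> \<bar>I (- x)\<bar>" if "x \<in> {0..1}" for x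
    using lower[of "-x"] that reflect[of x "\<lambda>x. (u x)\<^sup>2"] by simp
  show "0 < integral {0..1} (\<lambda>x. (u (- x))\<^sup>2)"
    using N reflect[of 0 "\<lambda>x. (u x)\<^sup>2"] by simp
qed (rule Q)

lemma has_integral_le_ae:
  fixes f g :: "real \<Rightarrow> real"
  assumes "(f has_integral i) S" "(g has_integral j) S" "negligible E"
    and "\<And>x. x \<in> S - E \<Longrightarrow> f x \<le> g x"
  shows "i \<le> j"
proof -
  have "((\<lambda>x. if x \<in> E then g x else f x) has_integral i) S"
    by (rule has_integral_spike[OF assms(3) _ assms(1)]) auto
  then show ?thesis by (rule has_integral_le[OF _ assms(2)]) (use assms(4) in auto)
qed

lemma norm_diff_le_integral_derivative:
  fixes y y' :: "real \<Rightarrow> 'a::banach"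
  assumes "a \<le> b" and "continuous_on {a..b} y'"
    and "\<And>x. x \<in> {a..b} \<Longrightarrow> (y has_vector_derivative y' x) (at x within {a..b})"
  shows "norm (y b - y a) \<le> integral {a..b} (\<lambda>t. norm (y' t))"
proof -
  have "(y' has_integral (y b - y a)) {a..b}"
    using assms by (intro fundamental_theorem_of_calculus) auto
  then have "y b - y a = integral {a..b} y'" by (simp add: integral_unique)
  also have "norm \<dots> \<le> integral {a..b} (\<lambda>t. norm (y' t))"
    using assms(2)
    by (intro integral_norm_bound_integral integrable_continuous_interval continuous_intros) auto
  finally show ?thesis .
qed


section \<open>The Lagrange identity\<close>

definition flux :: "(real \<Rightarrow> complex) \<Rightarrow> (real \<Rightarrow> complex) \<Rightarrow> real \<Rightarrow> complex" where
  "flux y y' x = y' x * cnj (y x)"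

lemma lagrange_identity:
  fixes y y' :: "real \<Rightarrow> complex" and q w :: "real \<Rightarrow> real"
  assumes acy: "abs_continuous_on {c..d} y" and acy': "abs_continuous_on {c..d} y'"
    and dy: "\<And>x. x \<in> {c..d} \<Longrightarrow> (y has_vector_derivative y' x) (at x within {c..d})"
    and ode: "AE x in lebesgue. x \<in> {c..d} \<longrightarrow>
      (\<exists>y''. (y' has_vector_derivative y'') (at x within {c..d}) \<and>
             - y'' + complex_of_real (q x) * y x = lam * complex_of_real (w x) * y x)"
    and ab: "c \<le> a" "a \<le> b" "b \<le> d"
  shows "((\<lambda>x. complex_of_real ((cmod (y' x))\<^sup>2 + q x * (cmod (y x))\<^sup>2) - lam * complex_of_real (w x * (cmod (y x))\<^sup>2))
           has_integral (flux y y' b - flux y y' a)) {a..b}"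
proof -
  obtain E where E: "negligible E" and ode_E: "\<And>x. x \<in> {c..d} - E \<Longrightarrow>
      \<exists>y''. (y' has_vector_derivative y'') (at x within {c..d}) \<and>
            - y'' + complex_of_real (q x) * y x = lam * complex_of_real (w x) * y x"
    using ode unfolding eventually_ae_filter_negligible by blast
  have "abs_continuous_on {c..d} (flux y y')"
    unfolding flux_def by (intro abs_continuous_on_mult abs_continuous_on_cnj acy acy')
  then have ac: "abs_continuous_on {a..b} (flux y y')"
    by (rule abs_continuous_on_subset) (use ab in auto)
  show ?thesis
  proof (rule fundamental_theorem_of_calculus_abs_continuous[OF ab(2) ac E])
    fix x assume x: "x \<in> {a..b} - E"
    then have x': "x \<in> {c..d} - E" using ab by auto
    obtain y'' where d2: "(y' has_vector_derivative y'') (at x within {c..d})"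
      and eq: "- y'' + complex_of_real (q x) * y x = lam * complex_of_real (w x) * y x"
      using ode_E[OF x'] by blast
    have "((\<lambda>x. cnj (y x)) has_vector_derivative cnj (y' x)) (at x within {c..d})"
      using has_vector_derivative_cnj dy x' by auto
    then have "(flux y y' has_vector_derivative (y' x * cnj (y' x) + y'' * cnj (y x))) (at x within {c..d})"
      unfolding flux_def by (rule has_vector_derivative_mult[OF d2])
    moreover have "y' x * cnj (y' x) + y'' * cnj (y x) =
        complex_of_real ((cmod (y' x))\<^sup>2 + q x * (cmod (y x))\<^sup>2) - lam * complex_of_real (w x * (cmod (y x))\<^sup>2)"
    proof -
      have y'': "y'' = complex_of_real (q x) * y x - lam * complex_of_real (w x) * y x"
        using eq by (simp add: algebra_simps)
      have n: "y x * cnj (y x) = complex_of_real ((cmod (y x))\<^sup>2)"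
        "y' x * cnj (y' x) = complex_of_real ((cmod (y' x))\<^sup>2)"
        by (rule complex_norm_square[symmetric])+
      have "y' x * cnj (y' x) + y'' * cnj (y x) = complex_of_real ((cmod (y' x))\<^sup>2)
          + (complex_of_real (q x) - lam * complex_of_real (w x)) * (y x * cnj (y x))"
        unfolding n(2) y'' by (simp add: algebra_simps)
      also have "\<dots> = complex_of_real ((cmod (y' x))\<^sup>2 + q x * (cmod (y x))\<^sup>2)
          - lam * complex_of_real (w x * (cmod (y x))\<^sup>2)"
        unfolding n(1) by (simp add: algebra_simps)
      finally show ?thesis .
    qed
    ultimately show "(flux y y' has_vector_derivative
        complex_of_real ((cmod (y' x))\<^sup>2 + q x * (cmod (y x))\<^sup>2) - lam * complex_of_real (w x * (cmod (y x))\<^sup>2))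
        (at x within {a..b})"
      using ab x by (auto intro: has_vector_derivative_within_subset)
  qed
qed

lemma lagrange_identity_imaginary:
  fixes y y' :: "real \<Rightarrow> complex" and q w :: "real \<Rightarrow> real"
  assumes "((\<lambda>x. complex_of_real ((cmod (y' x))\<^sup>2 + q x * (cmod (y x))\<^sup>2)
               - \<i> * complex_of_real \<alpha> * complex_of_real (w x * (cmod (y x))\<^sup>2))
           has_integral (flux y y' b - flux y y' a)) {a..b}"
  shows "((\<lambda>x. (cmod (y' x))\<^sup>2 + q x * (cmod (y x))\<^sup>2) has_integral Re (flux y y' b - flux y y' a)) {a..b}"
    and "((\<lambda>x. \<alpha> * (w x * (cmod (y x))\<^sup>2)) has_integral Im (flux y y' a - flux y y' b)) {a..b}"
proof -
  show "((\<lambda>x. (cmod (y' x))\<^sup>2 + q x * (cmod (y x))\<^sup>2) has_integral Re (flux y y' b - flux y y' a)) {a..b}"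
    using has_integral_linear[OF assms bounded_linear_Re] by (simp add: o_def)
  have "((\<lambda>x. - (\<alpha> * (w x * (cmod (y x))\<^sup>2))) has_integral Im (flux y y' b - flux y y' a)) {a..b}"
    using has_integral_linear[OF assms bounded_linear_Im] by (simp add: o_def)
  from has_integral_neg[OF this]
  show "((\<lambda>x. \<alpha> * (w x * (cmod (y x))\<^sup>2)) has_integral Im (flux y y' a - flux y y' b)) {a..b}"
    by simp
qed


section \<open>The estimate for an eigenfunction of a purely imaginary eigenvalue\<close>

locale imaginary_eigenfunction =
  fixes q w :: "real \<Rightarrow> real" and q0 w0 \<alpha> :: real and y y' :: "real \<Rightarrow> complex" and E :: "real set"
  assumes q0: "q0 < 0" and w0: "0 < w0" and \<alpha>: "\<alpha> \<noteq> 0"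
    and cont_y: "continuous_on {-1..1} y" and cont_y': "continuous_on {-1..1} y'"
    and deriv: "\<And>x. x \<in> {-1..1} \<Longrightarrow> (y has_vector_derivative y' x) (at x within {-1..1})"
    and boundary: "y (-1) = 0" "y 1 = 0"
    and nontrivial: "\<exists>x\<in>{-1..1}. y x \<noteq> 0"
    and energy_identity: "\<And>a b. -1 \<le> a \<Longrightarrow> a \<le> b \<Longrightarrow> b \<le> 1 \<Longrightarrow>
      ((\<lambda>x. (cmod (y' x))\<^sup>2 + q x * (cmod (y x))\<^sup>2) has_integral Re (flux y y' b - flux y y' a)) {a..b}"
    and mass_identity: "\<And>a b. -1 \<le> a \<Longrightarrow> a \<le> b \<Longrightarrow> b \<le> 1 \<Longrightarrow>
      ((\<lambda>x. \<alpha> * (w x * (cmod (y x))\<^sup>2)) has_integral Im (flux y y' a - flux y y' b)) {a..b}"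
    and null: "negligible E"
    and q_lower: "\<And>x. x \<in> {-1..1} - E \<Longrightarrow> q0 \<le> q x"
    and w_sign: "\<And>x. x \<in> {-1..1} - E \<Longrightarrow> 0 < x * w x"
    and w_lower: "\<And>x. x \<in> {-1..1} - E \<Longrightarrow> w0 \<le> \<bar>w x\<bar>"
begin

abbreviation P :: "real \<Rightarrow> complex" where "P \<equiv> flux y y'"

lemma P_boundary: "P (-1) = 0" "P 1 = 0"
  by (simp_all add: flux_def boundary)

lemma abs_Im_P_le: "\<bar>Im (P x)\<bar> \<le> cmod (y x) * cmod (y' x)"
  using abs_Im_le_cmod[of "P x"] by (simp add: flux_def norm_mult mult.commute)

lemma continuous_on_mass: "continuous_on {a..b} (\<lambda>x. (cmod (y x))\<^sup>2)" if "-1 \<le> a" "b \<le> 1"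
  using that by (intro continuous_intros continuous_on_subset[OF cont_y]) auto

lemma continuous_on_kinetic: "continuous_on {a..b} (\<lambda>x. (cmod (y' x))\<^sup>2)" if "-1 \<le> a" "b \<le> 1"
  using that by (intro continuous_intros continuous_on_subset[OF cont_y']) auto

lemma modulus_change_le:
  assumes "-1 \<le> a" "a \<le> b" "b \<le> 1"
  shows "cmod (y b - y a) \<le> integral {a..b} (\<lambda>t. cmod (y' t))"
  using assms by (intro norm_diff_le_integral_derivative continuous_on_subset[OF cont_y']
      has_vector_derivative_within_subset[OF deriv]) auto

lemma kinetic_le_mass:
  assumes ab: "-1 \<le> a" "a \<le> b" "b \<le> 1" and flux: "Re (P b - P a) \<le> 0"
  shows "integral {a..b} (\<lambda>x. (cmod (y' x))\<^sup>2) \<le> - q0 * integral {a..b} (\<lambda>x. (cmod (y x))\<^sup>2)"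
proof -
  have "((\<lambda>x. (cmod (y' x))\<^sup>2 + q0 * (cmod (y x))\<^sup>2) has_integral
        integral {a..b} (\<lambda>x. (cmod (y' x))\<^sup>2) + q0 * integral {a..b} (\<lambda>x. (cmod (y x))\<^sup>2)) {a..b}"
    using ab by (intro has_integral_add has_integral_mult_right integrable_integral integrable_continuous_interval
        continuous_on_mass continuous_on_kinetic) auto
  then have "integral {a..b} (\<lambda>x. (cmod (y' x))\<^sup>2) + q0 * integral {a..b} (\<lambda>x. (cmod (y x))\<^sup>2)
      \<le> Re (P b - P a)"
    using ab q_lower by (elim has_integral_le_ae[OF _ energy_identity[OF ab] null])
      (auto intro: mult_right_mono)
  then show ?thesis using flux by simp
qed

text \<open>On a subinterval on one side of 0 the weight has a fixed sign with |w| \<ge> w0, so the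
  flux change controls the mass there.\<close>
lemma mass_le_flux:
  assumes ab: "-1 \<le> a" "a \<le> b" "b \<le> 1" and side: "0 \<le> a \<or> b \<le> 0"
  shows "\<bar>\<alpha>\<bar> * w0 * integral {a..b} (\<lambda>x. (cmod (y x))\<^sup>2) \<le> \<bar>Im (P a - P b)\<bar>"
proof -
  define M where "M = integral {a..b} (\<lambda>x. (cmod (y x))\<^sup>2)"
  have M: "((\<lambda>x. (cmod (y x))\<^sup>2) has_integral M) {a..b}"
    unfolding M_def using ab by (intro integrable_integral integrable_continuous_interval continuous_on_mass)
  have W: "((\<lambda>x. w x * (cmod (y x))\<^sup>2) has_integral Im (P a - P b) / \<alpha>) {a..b}"
    using has_integral_mult_right[OF mass_identity[OF ab], of "1 / \<alpha>"] \<alpha> by (simp add: divide_simps)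
  have sign: "0 < w x \<longleftrightarrow> 0 \<le> a" if "x \<in> {a..b} - E" for x
    using w_sign[of x] that ab side by (auto simp: zero_less_mult_iff)
  have "w0 * M \<le> \<bar>Im (P a - P b) / \<alpha>\<bar>"
  proof (cases "0 \<le> a")
    case True
    have "w0 * M \<le> Im (P a - P b) / \<alpha>"
    proof (rule has_integral_le_ae[OF has_integral_mult_right[OF M] W null])
      show "w0 * (cmod (y x))\<^sup>2 \<le> w x * (cmod (y x))\<^sup>2" if "x \<in> {a..b} - E" for x
        using sign[OF that] True w_lower[of x] that ab by (intro mult_right_mono) auto
    qed
    then show ?thesis by linarith
  next
    case False
    have "Im (P a - P b) / \<alpha> \<le> - w0 * M"
    proof (rule has_integral_le_ae[OF W has_integral_mult_right[OF M] null])
      show "w x * (cmod (y x))\<^sup>2 \<le> - w0 * (cmod (y x))\<^sup>2" if "x \<in> {a..b} - E" for x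
        using sign[OF that] False w_lower[of x] that ab by (intro mult_right_mono) auto
    qed
    then show ?thesis by linarith
  qed
  then have "\<bar>\<alpha>\<bar> * (w0 * M) \<le> \<bar>\<alpha>\<bar> * \<bar>Im (P a - P b) / \<alpha>\<bar>"
    by (rule mult_left_mono) simp
  also have "\<dots> = \<bar>Im (P a - P b)\<bar>" using \<alpha> by (simp add: abs_divide)
  finally show ?thesis by (simp add: M_def mult.assoc)
qed

lemma right_half_bound:
  assumes "0 \<le> Re (P 0)" and "0 < integral {0..1} (\<lambda>x. (cmod (y x))\<^sup>2)"
  shows "\<bar>\<alpha>\<bar> * w0 \<le> 4 * (- q0) powr (3/2)"
proof (rule energy_flux_bound[of "\<lambda>x. cmod (y x)" "\<lambda>x. cmod (y' x)" "\<lambda>x. Im (P x)"])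
  show "continuous_on {0..1} (\<lambda>x. cmod (y x))" "continuous_on {0..1} (\<lambda>x. cmod (y' x))"
    "continuous_on {0..1} (\<lambda>x. Im (P x))"
    unfolding flux_def by (intro continuous_intros continuous_on_subset[OF cont_y] continuous_on_subset[OF cont_y']; auto)+
  show "integral {0..1} (\<lambda>x. (cmod (y' x))\<^sup>2) \<le> - q0 * integral {0..1} (\<lambda>x. (cmod (y x))\<^sup>2)"
    using assms(1) P_boundary by (intro kinetic_le_mass) auto
  show "cmod (y x) \<le> integral {x..1} (\<lambda>t. cmod (y' t))" if "x \<in> {0..1}" for x
    using modulus_change_le[of x 1] that boundary by simp
  show "\<bar>\<alpha>\<bar> * w0 * integral {x..1} (\<lambda>t. (cmod (y t))\<^sup>2) \<le> \<bar>Im (P x)\<bar>" if "x \<in> {0..1}" for x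
    using mass_le_flux[of x 1] that P_boundary by auto
qed (use abs_Im_P_le q0 assms(2) in auto)

lemma left_half_bound:
  assumes "Re (P 0) \<le> 0" and "0 < integral {-1..0} (\<lambda>x. (cmod (y x))\<^sup>2)"
  shows "\<bar>\<alpha>\<bar> * w0 \<le> 4 * (- q0) powr (3/2)"
proof (rule energy_flux_bound_left[of "\<lambda>x. cmod (y x)" "\<lambda>x. cmod (y' x)" "\<lambda>x. Im (P x)"])
  show "continuous_on {-1..0} (\<lambda>x. cmod (y x))" "continuous_on {-1..0} (\<lambda>x. cmod (y' x))"
    "continuous_on {-1..0} (\<lambda>x. Im (P x))"
    unfolding flux_def by (intro continuous_intros continuous_on_subset[OF cont_y] continuous_on_subset[OF cont_y']; auto)+
  show "integral {-1..0} (\<lambda>x. (cmod (y' x))\<^sup>2) \<le> - q0 * integral {-1..0} (\<lambda>x. (cmod (y x))\<^sup>2)"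
    using assms(1) P_boundary by (intro kinetic_le_mass) auto
  show "cmod (y x) \<le> integral {-1..x} (\<lambda>t. cmod (y' t))" if "x \<in> {-1..0}" for x
    using modulus_change_le[of "-1" x] that boundary by simp
  show "\<bar>\<alpha>\<bar> * w0 * integral {-1..x} (\<lambda>t. (cmod (y t))\<^sup>2) \<le> \<bar>Im (P x)\<bar>" if "x \<in> {-1..0}" for x
    using mass_le_flux[of "-1" x] that P_boundary by auto
qed (use abs_Im_P_le q0 assms(2) in auto)

text \<open>A nontrivial y has positive mass on the half of [-1,1] towards which the real part of
  the flux at 0 points: if the mass vanished there, y would vanish on that half, so y 0 = 0,
  which forces Re (P 0) = 0 and then y = 0 on both halves.\<close>
lemma mass_on_correct_half:
  "(0 \<le> Re (P 0) \<and> 0 < integral {0..1} (\<lambda>x. (cmod (y x))\<^sup>2)) \<or>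
   (Re (P 0) \<le> 0 \<and> 0 < integral {-1..0} (\<lambda>x. (cmod (y x))\<^sup>2))"
proof -
  have vanish: "y x = 0" if "-1 \<le> a" "a < b" "b \<le> 1" "x \<in> {a..b}"
    and "integral {a..b} (\<lambda>x. (cmod (y x))\<^sup>2) \<le> 0" for a b x
  proof -
    have "integral {a..b} (\<lambda>x. (cmod (y x))\<^sup>2) = 0"
      using that by (intro antisym integral_nonneg integrable_continuous_interval continuous_on_mass) auto
    moreover have "((\<lambda>x. (cmod (y x))\<^sup>2) has_integral integral {a..b} (\<lambda>x. (cmod (y x))\<^sup>2)) {a..b}"
      using that by (intro integrable_integral integrable_continuous_interval continuous_on_mass) auto
    ultimately have "(cmod (y x))\<^sup>2 = 0"
      using that by (intro has_integral_0_cbox_imp_0[of a b "\<lambda>x. (cmod (y x))\<^sup>2"])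
        (auto intro: continuous_on_mass)
    then show ?thesis by simp
  qed
  have "y 0 = 0 \<Longrightarrow> Re (P 0) = 0" by (simp add: flux_def)
  then show ?thesis
    using nontrivial vanish[of 0 1] vanish[of "-1" 0] by (smt (verit) atLeastAtMost_iff)
qed

theorem imaginary_eigenvalue_bound: "\<bar>\<alpha>\<bar> * w0 \<le> 4 * (- q0) powr (3/2)"
  using mass_on_correct_half right_half_bound left_half_bound by blast

end


theorem theorem1p4:
  fixes q w :: "real \<Rightarrow> real" and q0 w0 :: real and lam :: complex
  assumes "set_integrable lebesgue {-1..1} q"
    and "set_integrable lebesgue {-1..1} w"
    and "AE x in lebesgue. x \<in> {-1..1} \<longrightarrow> q x = q (-x)"
    and "AE x in lebesgue. x \<in> {-1..1} \<longrightarrow> w (-x) = - w x"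
    and "AE x in lebesgue. x \<in> {-1..1} \<longrightarrow> x * w x > 0"
    and "q0 < 0" and "w0 > 0"
    and "AE x in lebesgue. x \<in> {-1..1} \<longrightarrow> q x \<ge> q0"
    and "AE x in lebesgue. x \<in> {-1..1} \<longrightarrow> \<bar>w x\<bar> \<ge> w0"
    and "Re lam = 0" and "lam \<noteq> 0"
    and "is_eigenvalue q w lam"
  shows "\<bar>Im lam\<bar> \<le> 4 * (- q0) powr (3/2) / w0"
proof -
  obtain y y' :: "real \<Rightarrow> complex" where
    nontrivial: "\<exists>x\<in>{-1..1}. y x \<noteq> 0" and acy: "abs_continuous_on {-1..1} y"
    and acy': "abs_continuous_on {-1..1} y'"
    and deriv: "\<forall>x\<in>{-1..1}. (y has_vector_derivative y' x) (at x within {-1..1})"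
    and ode: "AE x in lebesgue. x \<in> {-1..1} \<longrightarrow>
      (\<exists>y''. (y' has_vector_derivative y'') (at x within {-1..1}) \<and>
             - y'' + complex_of_real (q x) * y x = lam * complex_of_real (w x) * y x)"
    and boundary: "y (-1) = 0" "y 1 = 0"
    using assms(12) unfolding is_eigenvalue_def by blast
  define \<alpha> where "\<alpha> = Im lam"
  have lam: "lam = \<i> * complex_of_real \<alpha>" using assms(10) by (simp add: \<alpha>_def complex_eq_iff)
  have "AE x in lebesgue. x \<in> {-1..1} \<longrightarrow> q0 \<le> q x \<and> 0 < x * w x \<and> w0 \<le> \<bar>w x\<bar>"
    using assms(5,8,9) by eventually_elim blast
  then obtain E where "negligible E"
    and bounds: "\<And>x. x \<in> {-1..1} - E \<Longrightarrow> q0 \<le> q x \<and> 0 < x * w x \<and> w0 \<le> \<bar>w x\<bar>"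
    unfolding eventually_ae_filter_negligible by blast
  have identity: "((\<lambda>x. complex_of_real ((cmod (y' x))\<^sup>2 + q x * (cmod (y x))\<^sup>2)
        - \<i> * complex_of_real \<alpha> * complex_of_real (w x * (cmod (y x))\<^sup>2))
      has_integral (flux y y' b - flux y y' a)) {a..b}" if "-1 \<le> a" "a \<le> b" "b \<le> 1" for a b
    using lagrange_identity[OF acy acy' _ ode that] deriv unfolding lam by blast
  interpret imaginary_eigenfunction q w q0 w0 \<alpha> y y' E
    using assms(6,7,11) lam nontrivial deriv boundary lagrange_identity_imaginary[OF identity]
      \<open>negligible E\<close> bounds
      abs_continuous_on_imp_continuous_on[OF acy] abs_continuous_on_imp_continuous_on[OF acy']
    by unfold_locales (auto simp: complex_eq_iff)
  show ?thesis
    using imaginary_eigenvalue_bound assms(7) by (simp add: \<alpha>_def pos_le_divide_eq)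
qed

end
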